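(* Let $f_1,\dots,f_p$ be analytic on an open disk centered at $0$, $A_1,\dots,A_p\in\mathbb{C}^{n\times n}$, $k\ge1$, and $W\in\mathbb{C}^{n\times(k+1)}$. Let $Z=\sum_{m=1}^pA_mW(G_{k+1}\circ F_m)$, where $G_{k+1}$ and $F_m$ are as in the context. Let $1\le q\le k+1$ and let $U,V\in\mathbb{R}^{(k+1)\times q}$, with columns $u_j,v_j$, be factors of a best rank-$q$ approximation $UV^T$ of $G_{k+1}$. Then $$\tilde Z=\sum_{m=1}^pA_m\sum_{j=1}^qW\operatorname{diag}(u_j)F_m\operatorname{diag}(v_j)$$ satisfies $$\|Z-\tilde Z\|_F\le\Big(\sum_{m=1}^p\|A_mW\|_2\,\|F_m\|_F\Big)\sum_{j=q+1}^{k+1}\sigma_j(G_{k+1}),$$ where $\sigma_j(G_{k+1})$ are the singular values of $G_{k+1}$ in decreasing order.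
   Context: $\mathbf{C}=[c_{i,j}]_{i,j\ge1}$ is the infinite matrix determined by $c_{i,1}=1/(i+1)$ ($i\ge1$) and $c_{i-1,j}=\frac{j}{i}c_{i,j-1}$ ($i,j>1$). $G_{k+1}\in\mathbb{R}^{(k+1)\times(k+1)}$ has entries $g_{j,1}=g_{1,j}=1/j$ ($j=1,\dots,k+1$) and $g_{i,j}=c_{i-1,j}/j$ for $i,j\ge2$. $F_m\in\mathbb{C}^{(k+1)\times(k+1)}$ is the Hankel matrix with $(i,j)$ entry $f_m^{(i+j-1)}(0)$. $\circ$ is the Hadamard product; $\operatorname{diag}(u)$ is the diagonal matrix with diagonal $u$. *)

theory Defs
  imports "HOL-Analysis.Analysis" "Jordan_Normal_Form.Matrix" "Jordan_Normal_Form.Char_Poly"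
    "Jordan_Normal_Form.DL_Rank"
begin

(* The infinite matrix C = [c_{i,j}]_{i,j>=1} (1-based indices):
   c_{i,1} = 1/(i+1),  c_{i,j} = j/(i+1) * c_{i+1,j-1}  for j >= 2
   (equivalent to c_{i-1,j} = (j/i) c_{i,j-1} for i,j > 1). Index 0 is unused. *)
fun cC :: "nat \<Rightarrow> nat \<Rightarrow> real" where
  "cC i 0 = 0"
| "cC i (Suc 0) = 1 / real (i + 1)"
| "cC i (Suc (Suc j)) = real (Suc (Suc j)) / real (i + 1) * cC (Suc i) (Suc j)"

(* G_{K} as a K x K real matrix (0-based storage: entry (i,j) is g_{i+1,j+1}) *)
definition Gmat :: "nat \<Rightarrow> real mat" where
  "Gmat K = mat K K (\<lambda>(i,j).
     if i = 0 then 1 / real (j + 1)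
     else if j = 0 then 1 / real (i + 1)
     else cC i (j + 1) / real (j + 1))"

(* Hankel matrix of derivatives: (i,j) entry (1-based) f^{(i+j-1)}(0) *)
definition Fmat :: "nat \<Rightarrow> (complex \<Rightarrow> complex) \<Rightarrow> complex mat" where
  "Fmat K f = mat K K (\<lambda>(i,j). (deriv ^^ (i + j + 1)) f 0)"

definition hadamard :: "'a::times mat \<Rightarrow> 'a mat \<Rightarrow> 'a mat" where
  "hadamard A B = mat (dim_row A) (dim_col A) (\<lambda>(i,j). A $$ (i,j) * B $$ (i,j))"

definition mat_sum :: "nat \<Rightarrow> nat \<Rightarrow> 'b set \<Rightarrow> ('b \<Rightarrow> 'a::comm_monoid_add mat) \<Rightarrow> 'a mat" where
  "mat_sum nr nc I f = mat nr nc (\<lambda>(i,j). \<Sum>m\<in>I. f m $$ (i,j))"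

definition frob_norm :: "'a::real_normed_vector mat \<Rightarrow> real" where
  "frob_norm M = sqrt (\<Sum>i<dim_row M. \<Sum>j<dim_col M. (norm (M $$ (i,j)))\<^sup>2)"

definition vec_norm2 :: "'a::real_normed_vector vec \<Rightarrow> real" where
  "vec_norm2 x = sqrt (\<Sum>i<dim_vec x. (norm (x $ i))\<^sup>2)"

definition spec_norm :: "complex mat \<Rightarrow> real" where
  "spec_norm M = Sup {vec_norm2 (M *\<^sub>v x) | x. x \<in> carrier_vec (dim_col M) \<and> vec_norm2 x \<le> 1}"

definition singular_values :: "real mat \<Rightarrow> real list" where
  "singular_values G =
     rev (sorted_list_of_multiset (image_mset sqrt (proots (char_poly (transpose_mat G * G)))))"

end

theory Submission
  imports Defs "Jordan_Normal_Form.Spectral_Radius"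
begin

text \<open>
  The low-rank expression is a Hadamard product in disguise: the sum over j of
  diag(u_j) F diag(v_j) is (U V^T) \<circ> F, so Z - Z~ is the sum over m of
  A_m W ((G - U V^T) \<circ> F_m). Each term has Frobenius norm at most
  \<parallel>A_m W\<parallel>_2 \<parallel>F_m\<parallel>_F \<parallel>G - U V^T\<parallel>_F, since every entry of G - U V^T is bounded by its
  Frobenius norm.

  The spectral theorem for real symmetric matrices is proved by deflation: the eigenvalues
  of a real symmetric matrix are real, so it has a real unit eigenvector, and a Householder
  reflection completes that vector to an orthonormal basis.
\<close>

section \<open>Norms of vectors and matrices\<close>

lemma vec_norm2_nonneg: "0 \<le> vec_norm2 v"
  unfolding vec_norm2_def by (simp add: sum_nonneg)

lemma vec_norm2_pos:
  assumes "v \<in> carrier_vec n" "v \<noteq> 0\<^sub>v n"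
  shows "0 < vec_norm2 v"
proof -
  obtain i where i: "i < n" "v $ i \<noteq> 0"
    using assms by (metis eq_vecI carrier_vecD index_zero_vec)
  have "0 < (norm (v $ i))\<^sup>2" using i by simp
  also have "\<dots> \<le> (\<Sum>i<dim_vec v. (norm (v $ i))\<^sup>2)"
    using i assms(1) by (intro member_le_sum) auto
  finally show ?thesis unfolding vec_norm2_def by simp
qed

lemma vec_norm2_smult:
  "vec_norm2 (c \<cdot>\<^sub>v (v :: 'a::real_normed_div_algebra vec)) = norm c * vec_norm2 v"
  unfolding vec_norm2_def
  by (simp add: norm_mult power_mult_distrib sum_distrib_left[symmetric] real_sqrt_mult)

lemma frob_norm_nonneg: "0 \<le> frob_norm M"
  unfolding frob_norm_def by (simp add: sum_nonneg)

lemma frob_norm_eq_L2_set: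
  "frob_norm M = L2_set (\<lambda>x. norm (M $$ x)) ({..<dim_row M} \<times> {..<dim_col M})"
  unfolding frob_norm_def L2_set_def by (simp add: sum.cartesian_product case_prod_beta)

lemma frob_norm_map_of_real:
  "frob_norm (map_mat of_real E :: 'a::real_normed_algebra_1 mat) = frob_norm E"
  unfolding frob_norm_def by simp

lemma vec_norm2_mult_mat_vec_le_frob_norm:
  fixes T :: "'a::real_normed_algebra mat"
  assumes T: "T \<in> carrier_mat m n" and y: "y \<in> carrier_vec n"
  shows "vec_norm2 (T *\<^sub>v y) \<le> frob_norm T * vec_norm2 y"
proof -
  have "(norm ((T *\<^sub>v y) $ i))\<^sup>2 \<le> (\<Sum>l<n. (norm (T $$ (i, l)))\<^sup>2) * (\<Sum>l<n. (norm (y $ l))\<^sup>2)"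
    if i: "i < m" for i
  proof -
    have "norm ((T *\<^sub>v y) $ i) \<le> (\<Sum>l<n. \<bar>norm (T $$ (i, l))\<bar> * \<bar>norm (y $ l)\<bar>)"
      using T y i
      by (auto simp: scalar_prod_def atLeast0LessThan intro!: sum_norm_le norm_mult_ineq)
    also have "\<dots> \<le> L2_set (\<lambda>l. norm (T $$ (i, l))) {..<n} * L2_set (\<lambda>l. norm (y $ l)) {..<n}"
      by (rule L2_set_mult_ineq)
    finally show ?thesis
      by (rule power_mono[THEN order_trans])
        (simp_all add: power_mult_distrib L2_set_def sum_nonneg)
  qed
  then have "(\<Sum>i<m. (norm ((T *\<^sub>v y) $ i))\<^sup>2)
      \<le> (\<Sum>i<m. \<Sum>l<n. (norm (T $$ (i, l)))\<^sup>2) * (\<Sum>l<n. (norm (y $ l))\<^sup>2)"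
    unfolding sum_distrib_right by (intro sum_mono) auto
  then show ?thesis
    using T y unfolding frob_norm_def vec_norm2_def by (simp flip: real_sqrt_mult)
qed

lemma vec_norm2_mult_mat_vec_unit_le_spec_norm:
  assumes T: "T \<in> carrier_mat m n" and x: "x \<in> carrier_vec n" "vec_norm2 x \<le> 1"
  shows "vec_norm2 (T *\<^sub>v x) \<le> spec_norm T"
  unfolding spec_norm_def
proof (rule cSup_upper)
  show "vec_norm2 (T *\<^sub>v x)
      \<in> {vec_norm2 (T *\<^sub>v x) |x. x \<in> carrier_vec (dim_col T) \<and> vec_norm2 x \<le> 1}"
    using T x by auto
  have "vec_norm2 (T *\<^sub>v y) \<le> frob_norm T" if "y \<in> carrier_vec n" "vec_norm2 y \<le> 1" for y
    using order_trans[OF vec_norm2_mult_mat_vec_le_frob_norm[OF T that(1)]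
        mult_left_mono[OF that(2) frob_norm_nonneg]] by simp
  then show "bdd_above {vec_norm2 (T *\<^sub>v x) |x. x \<in> carrier_vec (dim_col T) \<and> vec_norm2 x \<le> 1}"
    using T by (auto intro!: bdd_aboveI)
qed

lemma spec_norm_nonneg:
  assumes "T \<in> carrier_mat m n"
  shows "0 \<le> spec_norm T"
  using vec_norm2_mult_mat_vec_unit_le_spec_norm[OF assms zero_carrier_vec] assms
  by (simp add: vec_norm2_def order_trans[OF vec_norm2_nonneg])

lemma vec_norm2_mult_mat_vec_le_spec_norm:
  assumes T: "T \<in> carrier_mat m n" and x: "x \<in> carrier_vec n"
  shows "vec_norm2 (T *\<^sub>v x) \<le> spec_norm T * vec_norm2 x"
proof (cases "x = 0\<^sub>v n")
  case True
  then show ?thesis using T by (simp add: vec_norm2_def)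
next
  case False
  then have r: "0 < vec_norm2 x" using vec_norm2_pos[OF x] by simp
  define y where "y = complex_of_real (1 / vec_norm2 x) \<cdot>\<^sub>v x"
  have "vec_norm2 (T *\<^sub>v y) \<le> spec_norm T"
    using vec_norm2_mult_mat_vec_unit_le_spec_norm[OF T] x r
    by (simp add: y_def vec_norm2_smult norm_divide)
  moreover have "T *\<^sub>v y = complex_of_real (1 / vec_norm2 x) \<cdot>\<^sub>v (T *\<^sub>v x)"
    unfolding y_def by (rule mult_mat_vec[OF T x])
  ultimately show ?thesis
    using r by (simp add: vec_norm2_smult norm_divide field_simps)
qed

lemma frob_norm_mult_le_spec_norm:
  assumes T: "T \<in> carrier_mat m n" and B: "B \<in> carrier_mat n k"
  shows "frob_norm (T * B) \<le> spec_norm T * frob_norm B"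
proof -
  have "(\<Sum>i<m. \<Sum>c<k. (cmod ((T * B) $$ (i, c)))\<^sup>2) = (\<Sum>c<k. (vec_norm2 (T *\<^sub>v col B c))\<^sup>2)"
    using T B by (subst sum.swap) (simp add: vec_norm2_def sum_nonneg)
  also have "\<dots> \<le> (\<Sum>c<k. (spec_norm T * vec_norm2 (col B c))\<^sup>2)"
    using T B vec_norm2_mult_mat_vec_le_spec_norm
    by (intro sum_mono power_mono) (auto simp: vec_norm2_nonneg)
  also have "\<dots> = (spec_norm T)\<^sup>2 * (\<Sum>i<n. \<Sum>c<k. (cmod (B $$ (i, c)))\<^sup>2)"
    using B
    by (subst sum.swap) (simp add: power_mult_distrib vec_norm2_def sum_nonneg sum_distrib_left)
  finally have "sqrt (\<Sum>i<m. \<Sum>c<k. (cmod ((T * B) $$ (i, c)))\<^sup>2)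
      \<le> sqrt ((spec_norm T)\<^sup>2 * (\<Sum>i<n. \<Sum>c<k. (cmod (B $$ (i, c)))\<^sup>2))"
    by (rule real_sqrt_le_mono)
  then show ?thesis
    using T B spec_norm_nonneg[OF T] unfolding frob_norm_def by (simp add: real_sqrt_mult)
qed

lemma L2_set_norm_sum_le:
  fixes h :: "'i \<Rightarrow> 'j \<Rightarrow> 'a::real_normed_vector"
  assumes "finite I"
  shows "L2_set (\<lambda>x. norm (\<Sum>m\<in>I. h m x)) J \<le> (\<Sum>m\<in>I. L2_set (\<lambda>x. norm (h m x)) J)"
  using assms
proof (induction I rule: finite_induct)
  case empty
  then show ?case by (simp add: L2_set_0')
next
  case (insert a I)
  have "L2_set (\<lambda>x. norm (\<Sum>m\<in>insert a I. h m x)) J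
      \<le> L2_set (\<lambda>x. norm (h a x) + norm (\<Sum>m\<in>I. h m x)) J"
    using insert by (intro L2_set_mono) (auto intro: norm_triangle_ineq)
  also have "\<dots> \<le> L2_set (\<lambda>x. norm (h a x)) J + L2_set (\<lambda>x. norm (\<Sum>m\<in>I. h m x)) J"
    by (rule L2_set_triangle_ineq)
  also have "\<dots> \<le> (\<Sum>m\<in>insert a I. L2_set (\<lambda>x. norm (h m x)) J)"
    using insert by simp
  finally show ?case .
qed

lemma frob_norm_mat_sum_le:
  assumes "finite I" and "\<And>m. m \<in> I \<Longrightarrow> F m \<in> carrier_mat r c"
  shows "frob_norm (mat_sum r c I F) \<le> (\<Sum>m\<in>I. frob_norm (F m))"
proof -
  have "frob_norm (mat_sum r c I F) = L2_set (\<lambda>x. norm (\<Sum>m\<in>I. F m $$ x)) ({..<r} \<times> {..<c})"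
    unfolding frob_norm_eq_L2_set by (intro L2_set_cong) (auto simp: mat_sum_def)
  also have "\<dots> \<le> (\<Sum>m\<in>I. L2_set (\<lambda>x. norm (F m $$ x)) ({..<r} \<times> {..<c}))"
    by (rule L2_set_norm_sum_le[OF assms(1)])
  also have "\<dots> = (\<Sum>m\<in>I. frob_norm (F m))"
    using assms(2) by (intro sum.cong refl) (auto simp: frob_norm_eq_L2_set)
  finally show ?thesis .
qed

section \<open>Orthonormal systems\<close>

definition orthonormal_system :: "nat \<Rightarrow> (nat \<Rightarrow> nat \<Rightarrow> real) \<Rightarrow> bool" where
  "orthonormal_system n P \<longleftrightarrow>
     (\<forall>a<n. \<forall>c<n. (\<Sum>i<n. P a i * P c i) = (if a = c then 1 else 0))"

lemma orthonormal_systemD: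
  "orthonormal_system n P \<Longrightarrow> a < n \<Longrightarrow> c < n \<Longrightarrow>
     (\<Sum>i<n. P a i * P c i) = (if a = c then 1 else 0)"
  unfolding orthonormal_system_def by blast

lemma orthonormal_system_columns:
  assumes P: "orthonormal_system n P" and "i < n" "j < n"
  shows "(\<Sum>a<n. P a i * P a j) = (if i = j then 1 else 0)"
proof -
  define B where "B = mat n n (\<lambda>(i, a). P a i)"
  have B: "B \<in> carrier_mat n n" "transpose_mat B \<in> carrier_mat n n"
    unfolding B_def by auto
  have "transpose_mat B * B = 1\<^sub>m n"
    by (rule eq_matI)
      (use P in \<open>auto simp: B_def scalar_prod_def atLeast0LessThan orthonormal_systemD\<close>)
  then have "B * transpose_mat B = 1\<^sub>m n"
    using mat_mult_left_right_inverse[OF B(2,1)] by blast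
  then have "(B * transpose_mat B) $$ (i, j) = 1\<^sub>m n $$ (i, j)" by simp
  then show ?thesis
    using assms(2,3) by (auto simp: B_def scalar_prod_def atLeast0LessThan)
qed

lemma orthonormal_system_inner_combination:
  assumes P: "orthonormal_system n P" and a: "a < n" and C: "C \<subseteq> {..<n}"
  shows "(\<Sum>i<n. P a i * (\<Sum>c\<in>C. y c * P c i)) = (if a \<in> C then y a else 0)"
proof -
  have "(\<Sum>i<n. P a i * (\<Sum>c\<in>C. y c * P c i)) = (\<Sum>c\<in>C. y c * (\<Sum>i<n. P a i * P c i))"
    unfolding sum_distrib_left by (subst sum.swap) (simp add: mult_ac)
  also have "\<dots> = (\<Sum>c\<in>C. if c = a then y a else 0)"
    using C a by (intro sum.cong refl) (auto simp: orthonormal_systemD[OF P])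
  also have "\<dots> = (if a \<in> C then y a else 0)"
    using C by (simp add: sum.delta' finite_subset)
  finally show ?thesis .
qed

lemma orthonormal_expansion:
  assumes P: "orthonormal_system n P" and i: "i < n"
  shows "(\<Sum>d<n. P d i * (\<Sum>l<n. P d l * y l)) = y i"
proof -
  have "(\<Sum>d<n. P d i * (\<Sum>l<n. P d l * y l)) = (\<Sum>l<n. y l * (\<Sum>d<n. P d l * P d i))"
    unfolding sum_distrib_left sum_distrib_right by (subst sum.swap) (simp add: mult_ac)
  also have "\<dots> = (\<Sum>l<n. y l * (if l = i then 1 else 0))"
    by (intro sum.cong refl) (use i in \<open>simp add: orthonormal_system_columns[OF P]\<close>)
  also have "\<dots> = y i"
    using i by (simp add: if_distrib sum.delta' cong: if_cong)
  finally show ?thesis by simp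
qed

lemma orthonormal_parseval:
  assumes P: "orthonormal_system n P"
  shows "(\<Sum>j<n. (y j)\<^sup>2) = (\<Sum>a<n. (\<Sum>j<n. P a j * y j)\<^sup>2)"
proof -
  have "(\<Sum>a<n. (\<Sum>j<n. P a j * y j)\<^sup>2) = (\<Sum>j<n. y j * (\<Sum>a<n. P a j * (\<Sum>l<n. P a l * y l)))"
    unfolding power2_eq_square sum_distrib_left sum_distrib_right
    by (subst sum.swap) (simp add: mult_ac)
  also have "\<dots> = (\<Sum>j<n. y j * y j)"
    by (intro sum.cong refl) (simp add: orthonormal_expansion[OF P])
  finally show ?thesis by (simp add: power2_eq_square)
qed

lemma orthonormal_system_compose:
  assumes Q: "orthonormal_system n Q" and b: "orthonormal_system n b"
  shows "orthonormal_system n (\<lambda>a i. \<Sum>c<n. Q a c * b c i)"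
  unfolding orthonormal_system_def
proof (intro allI impI)
  fix a a' assume a: "a < n" and a': "a' < n"
  have "(\<Sum>i<n. (\<Sum>c<n. Q a c * b c i) * (\<Sum>d<n. Q a' d * b d i))
      = (\<Sum>i<n. \<Sum>c<n. Q a c * (b c i * (\<Sum>d<n. Q a' d * b d i)))"
    by (simp add: sum_distrib_right mult.assoc)
  also have "\<dots> = (\<Sum>c<n. Q a c * (\<Sum>i<n. b c i * (\<Sum>d<n. Q a' d * b d i)))"
    by (subst sum.swap) (simp add: sum_distrib_left)
  also have "\<dots> = (\<Sum>c<n. Q a c * Q a' c)"
    by (intro sum.cong refl) (simp add: orthonormal_system_inner_combination[OF b])
  also have "\<dots> = (if a = a' then 1 else 0)"
    using orthonormal_systemD[OF Q a a'] .
  finally show "(\<Sum>i<n. (\<Sum>c<n. Q a c * b c i) * (\<Sum>d<n. Q a' d * b d i))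
      = (if a = a' then 1 else 0)" .
qed

lemma orthonormal_system_unit_vectors: "orthonormal_system n (\<lambda>a i. if a = i then 1 else 0)"
  unfolding orthonormal_system_def by (simp add: if_distrib[of "\<lambda>x. x * _"] cong: if_cong)

lemma householder_orthonormal_system:
  fixes w :: "nat \<Rightarrow> real"
  assumes d: "(\<Sum>i<n. (w i)\<^sup>2) \<noteq> 0"
  shows "orthonormal_system n (\<lambda>a i. (if a = i then 1 else 0) - 2 / (\<Sum>i<n. (w i)\<^sup>2) * w a * w i)"
  unfolding orthonormal_system_def
proof (intro allI impI)
  fix a c assume ac: "a < n" "c < n"
  define d where "d = (\<Sum>i<n. (w i)\<^sup>2)"
  define t where "t = 2 / d"
  have t: "t\<^sup>2 * d = 2 * t"
    unfolding t_def d_def using d by (simp add: power2_eq_square field_simps)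
  have "((if a = i then 1 else 0) - t * w a * w i) * ((if c = i then 1 else 0) - t * w c * w i)
      = (if a = i then 1 else 0) * (if c = i then 1 else 0)
        - t * w c * ((if a = i then 1 else 0) * w i) - t * w a * ((if c = i then 1 else 0) * w i)
        + t\<^sup>2 * w a * w c * (w i)\<^sup>2" for i
    by (simp add: algebra_simps power2_eq_square)
  then have "(\<Sum>i<n. ((if a = i then 1 else 0) - t * w a * w i)
                    * ((if c = i then 1 else 0) - t * w c * w i))
      = (if a = c then 1 else 0) - t * w c * w a - t * w a * w c + t\<^sup>2 * w a * w c * d"
    using ac unfolding d_def
    by (simp add: sum.distrib sum_subtractf sum_distrib_left[symmetric]
        if_distrib[of "\<lambda>x. x * _"] cong: if_cong)
  also have "\<dots> = (if a = c then 1 else 0)"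
    using t by (simp add: algebra_simps)
  finally show "(\<Sum>i<n. ((if a = i then 1 else 0) - 2 / (\<Sum>i<n. (w i)\<^sup>2) * w a * w i)
      * ((if c = i then 1 else 0) - 2 / (\<Sum>i<n. (w i)\<^sup>2) * w c * w i)) = (if a = c then 1 else 0)"
    unfolding t_def d_def .
qed

lemma orthonormal_system_extend:
  assumes x: "(\<Sum>i<n. (x i)\<^sup>2) = 1" and n: "0 < n"
  obtains b where "orthonormal_system n b" "\<And>i. i < n \<Longrightarrow> b 0 i = x i"
proof -
  \<comment> \<open>the reflection in the hyperplane orthogonal to w swaps the first unit vector and x\<close>
  define w where "w i = x i - (if i = 0 then 1 else 0)" for i
  define d where "d = (\<Sum>i<n. (w i)\<^sup>2)"
  show thesis
  proof (cases "d = 0")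
    case True
    then have "\<forall>i\<in>{..<n}. (w i)\<^sup>2 = 0"
      unfolding d_def by (subst sum_nonneg_eq_0_iff[symmetric]) auto
    then have "\<And>i. i < n \<Longrightarrow> (if 0 = i then 1 else 0) = x i"
      unfolding w_def by auto
    then show thesis by (rule that[OF orthonormal_system_unit_vectors])
  next
    case False
    have "(w i)\<^sup>2 = (x i)\<^sup>2 - 2 * ((if i = 0 then 1 else 0) * x i) + (if i = 0 then 1 else 0)" for i
      unfolding w_def by (simp add: power2_eq_square algebra_simps)
    then have "d = 2 - 2 * x 0"
      using n x unfolding d_def
      by (simp add: sum.distrib sum_subtractf sum_distrib_left[symmetric]
          if_distrib[of "\<lambda>x. x * _"] cong: if_cong)
    then have "2 / d * w 0 = - 1"
      using False unfolding w_def by (simp add: field_simps)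
    then have "(if 0 = i then 1 else 0) - 2 / d * w 0 * w i = x i" for i
      unfolding w_def by simp
    with householder_orthonormal_system[OF False[unfolded d_def]] show thesis
      unfolding d_def by (rule that)
  qed
qed

section \<open>Spectral theorem for real symmetric matrices\<close>

definition orthonormal_eigenbasis :: "real mat \<Rightarrow> (nat \<Rightarrow> real) \<Rightarrow> (nat \<Rightarrow> nat \<Rightarrow> real) \<Rightarrow> bool"
  where "orthonormal_eigenbasis S \<mu> P \<longleftrightarrow> orthonormal_system (dim_row S) P \<and>
    (\<forall>a<dim_row S. \<forall>i<dim_row S. (\<Sum>j<dim_row S. S $$ (i, j) * P a j) = \<mu> a * P a i)"

lemma symmetric_mat_eigenvalue_real:
  fixes S :: "real mat"
  assumes S: "S \<in> carrier_mat n n" and sym: "transpose_mat S = S"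
    and z: "eigenvalue (map_mat complex_of_real S) z"
  shows "Im z = 0"
proof -
  obtain v where v: "v \<in> carrier_vec n" "v \<noteq> 0\<^sub>v n" "map_mat of_real S *\<^sub>v v = z \<cdot>\<^sub>v v"
    using z S unfolding eigenvalue_def eigenvector_def by auto
  have Sv: "(\<Sum>j<n. of_real (S $$ (i, j)) * v $ j) = z * v $ i" if "i < n" for i
    using arg_cong[OF v(3), of "\<lambda>u. u $ i"] that S v(1)
    by (simp add: scalar_prod_def atLeast0LessThan)
  define Q where "Q = (\<Sum>i<n. \<Sum>j<n. cnj (v $ i) * of_real (S $$ (i, j)) * v $ j)"
  define r where "r = (\<Sum>i<n. (cmod (v $ i))\<^sup>2)"
  \<comment> \<open>Q is the Hermitian form of S at v: it equals z r and, by symmetry, its own conjugate\<close>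
  have "Q = (\<Sum>i<n. cnj (v $ i) * (z * v $ i))"
    unfolding Q_def by (intro sum.cong refl) (simp add: Sv[symmetric] sum_distrib_left mult.assoc)
  also have "\<dots> = z * of_real r"
    unfolding r_def of_real_sum sum_distrib_left
    by (intro sum.cong refl) (simp add: complex_norm_square mult_ac del: of_real_power)
  finally have Qz: "Q = z * of_real r" .
  have S_sym: "S $$ (j, i) = S $$ (i, j)" if "i < n" "j < n" for i j
    using that S by (metis index_transpose_mat(1) carrier_matD sym)
  have "cnj Q = (\<Sum>i<n. \<Sum>j<n. v $ i * of_real (S $$ (i, j)) * cnj (v $ j))"
    unfolding Q_def by simp
  also have "\<dots> = (\<Sum>j<n. \<Sum>i<n. v $ i * of_real (S $$ (i, j)) * cnj (v $ j))"
    by (rule sum.swap)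
  also have "\<dots> = Q"
    unfolding Q_def
  proof (intro sum.cong refl)
    fix i j assume "i \<in> {..<n}" "j \<in> {..<n}"
    then show "v $ j * of_real (S $$ (j, i)) * cnj (v $ i)
        = cnj (v $ i) * of_real (S $$ (i, j)) * v $ j"
      by (simp add: S_sym[of j i] mult_ac)
  qed
  finally have "cnj Q = Q" .
  have "0 < r"
    using vec_norm2_pos[OF v(1,2)] v(1) unfolding vec_norm2_def r_def by simp
  from arg_cong[OF \<open>cnj Q = Q\<close>, of Im] have "Im Q = 0" by simp
  then have "Im z * r = 0" by (simp add: Qz)
  with \<open>0 < r\<close> show ?thesis by simp
qed

lemma symmetric_mat_unit_eigenvector:
  fixes S :: "real mat"
  assumes S: "S \<in> carrier_mat n n" and sym: "transpose_mat S = S" and n: "0 < n"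
  obtains \<mu> x where "(\<Sum>i<n. (x i)\<^sup>2) = 1" "\<And>i. i < n \<Longrightarrow> (\<Sum>j<n. S $$ (i, j) * x j) = \<mu> * x i"
proof -
  have Sc: "map_mat complex_of_real S \<in> carrier_mat n n" using S by simp
  obtain z where z: "eigenvalue (map_mat complex_of_real S) z"
    using spectrum_non_empty[OF Sc n] unfolding spectrum_def by auto
  have "z = of_real (Re z)"
    using symmetric_mat_eigenvalue_real[OF S sym z] by (simp add: complex_eq_iff)
  then have "of_real (poly (char_poly S) (Re z)) = (0 :: complex)"
    using z of_real_hom.char_poly_hom[OF S]
    by (metis eigenvalue_root_char_poly[OF Sc] of_real_hom.poly_map_poly)
  then have "eigenvalue S (Re z)"
    using eigenvalue_root_char_poly[OF S] by simp
  then obtain v where v: "v \<in> carrier_vec n" "v \<noteq> 0\<^sub>v n" "S *\<^sub>v v = Re z \<cdot>\<^sub>v v"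
    using S unfolding eigenvalue_def eigenvector_def by auto
  define s where "s = vec_norm2 v"
  have s: "0 < s" and s2: "s\<^sup>2 = (\<Sum>i<n. (v $ i)\<^sup>2)"
    using vec_norm2_pos[OF v(1,2)] v(1) unfolding s_def vec_norm2_def by (simp_all add: sum_nonneg)
  show thesis
  proof (rule that[of "\<lambda>i. v $ i / s" "Re z"])
    show "(\<Sum>i<n. (v $ i / s)\<^sup>2) = 1"
      using s by (simp add: power_divide sum_divide_distrib[symmetric] s2[symmetric])
    fix i assume "i < n"
    then have "(\<Sum>j<n. S $$ (i, j) * v $ j) = Re z * v $ i"
      using arg_cong[OF v(3), of "\<lambda>u. u $ i"] S v(1) by (simp add: scalar_prod_def atLeast0LessThan)
    then show "(\<Sum>j<n. S $$ (i, j) * (v $ j / s)) = Re z * (v $ i / s)"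
      by (simp add: sum_divide_distrib[symmetric])
  qed
qed

definition basis_change_mat :: "nat \<Rightarrow> (nat \<Rightarrow> nat \<Rightarrow> real) \<Rightarrow> real mat \<Rightarrow> real mat" where
  "basis_change_mat n b S = mat n n (\<lambda>(d, c). \<Sum>k<n. \<Sum>l<n. b d k * S $$ (k, l) * b c l)"

lemma basis_change_mat_carrier [simp]: "basis_change_mat n b S \<in> carrier_mat n n"
  unfolding basis_change_mat_def by simp

lemma basis_change_mat_symmetric:
  assumes S: "S \<in> carrier_mat n n" and sym: "transpose_mat S = S"
  shows "transpose_mat (basis_change_mat n b S) = basis_change_mat n b S"
proof (rule eq_matI)
  fix d c assume "d < dim_row (basis_change_mat n b S)" "c < dim_col (basis_change_mat n b S)"
  then have dc: "d < n" "c < n" using basis_change_mat_carrier[of n b S] by auto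
  have S_sym: "S $$ (l, k) = S $$ (k, l)" if "k < n" "l < n" for k l
    using that S by (metis index_transpose_mat(1) carrier_matD sym)
  have "(\<Sum>k<n. \<Sum>l<n. b c k * S $$ (k, l) * b d l) = (\<Sum>l<n. \<Sum>k<n. b c k * S $$ (k, l) * b d l)"
    by (rule sum.swap)
  also have "\<dots> = (\<Sum>k<n. \<Sum>l<n. b d k * S $$ (k, l) * b c l)"
    by (intro sum.cong refl) (simp add: S_sym mult_ac)
  finally show "transpose_mat (basis_change_mat n b S) $$ (d, c) = basis_change_mat n b S $$ (d, c)"
    using dc unfolding basis_change_mat_def by simp
qed (simp_all add: basis_change_mat_def)

lemma basis_change_mat_eigenvector_column:
  assumes b: "orthonormal_system n b" and b0: "\<And>i. i < n \<Longrightarrow> b 0 i = x i"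
    and Sx: "\<And>k. k < n \<Longrightarrow> (\<Sum>l<n. S $$ (k, l) * x l) = \<mu> * x k" and d: "d < n"
  shows "basis_change_mat n b S $$ (d, 0) = (if d = 0 then \<mu> else 0)"
proof -
  have "basis_change_mat n b S $$ (d, 0) = (\<Sum>k<n. b d k * (\<Sum>l<n. S $$ (k, l) * x l))"
    unfolding basis_change_mat_def using d by (simp add: b0 sum_distrib_left mult.assoc)
  also have "\<dots> = (\<Sum>k<n. b d k * (\<mu> * x k))"
    by (intro sum.cong refl) (simp add: Sx)
  also have "\<dots> = \<mu> * (\<Sum>k<n. b d k * b 0 k)"
    by (simp add: b0 sum_distrib_left mult_ac)
  finally show ?thesis
    using orthonormal_systemD[OF b d, of 0] d by simp
qed

lemma orthonormal_eigenbasis_change_basis: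
  fixes S :: "real mat"
  assumes S: "S \<in> carrier_mat n n" and b: "orthonormal_system n b"
    and Q: "orthonormal_eigenbasis (basis_change_mat n b S) \<mu> Q"
  shows "orthonormal_eigenbasis S \<mu> (\<lambda>a i. \<Sum>c<n. Q a c * b c i)"
  unfolding orthonormal_eigenbasis_def
proof (intro conjI allI impI)
  define T where "T d c = (\<Sum>k<n. \<Sum>l<n. b d k * S $$ (k, l) * b c l)" for d c
  have Q_orth: "orthonormal_system n Q"
    and Q_eig: "\<And>a d. a < n \<Longrightarrow> d < n \<Longrightarrow> (\<Sum>c<n. T d c * Q a c) = \<mu> a * Q a d"
    using Q unfolding orthonormal_eigenbasis_def T_def basis_change_mat_def by auto
  show "orthonormal_system (dim_row S) (\<lambda>a i. \<Sum>c<n. Q a c * b c i)"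
    using orthonormal_system_compose[OF Q_orth b] S by simp
  fix a i assume "a < dim_row S" "i < dim_row S"
  then have a: "a < n" and i: "i < n" using S by auto
  have Sb: "(\<Sum>j<n. S $$ (i, j) * b c j) = (\<Sum>d<n. T d c * b d i)" for c
  proof -
    have "(\<Sum>l<n. b d l * (\<Sum>j<n. S $$ (l, j) * b c j)) = T d c" for d
      unfolding T_def by (simp add: sum_distrib_left mult.assoc)
    then show ?thesis
      using orthonormal_expansion[OF b i, of "\<lambda>k. \<Sum>j<n. S $$ (k, j) * b c j"]
      by (simp add: mult.commute)
  qed
  have "(\<Sum>j<n. S $$ (i, j) * (\<Sum>c<n. Q a c * b c j))
      = (\<Sum>c<n. Q a c * (\<Sum>j<n. S $$ (i, j) * b c j))"
    unfolding sum_distrib_left by (subst sum.swap) (simp add: mult_ac)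
  also have "\<dots> = (\<Sum>c<n. \<Sum>d<n. Q a c * T d c * b d i)"
    by (simp add: Sb sum_distrib_left mult.assoc)
  also have "\<dots> = (\<Sum>d<n. (\<Sum>c<n. T d c * Q a c) * b d i)"
    by (subst sum.swap) (simp add: sum_distrib_left sum_distrib_right mult_ac)
  also have "\<dots> = \<mu> a * (\<Sum>d<n. Q a d * b d i)"
    by (simp add: Q_eig a sum_distrib_left mult.assoc)
  finally show "(\<Sum>j<dim_row S. S $$ (i, j) * (\<Sum>c<n. Q a c * b c j))
      = \<mu> a * (\<Sum>c<n. Q a c * b c i)"
    using S by simp
qed

lemma orthonormal_eigenbasis_deflate:
  fixes T :: "real mat"
  assumes T: "T \<in> carrier_mat (Suc m) (Suc m)"
    and row0: "\<And>c. c < Suc m \<Longrightarrow> T $$ (0, c) = (if c = 0 then \<mu>0 else 0)"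
    and col0: "\<And>d. d < Suc m \<Longrightarrow> T $$ (d, 0) = (if d = 0 then \<mu>0 else 0)"
    and P: "orthonormal_eigenbasis (mat m m (\<lambda>(i, j). T $$ (Suc i, Suc j))) \<mu> P"
  shows "orthonormal_eigenbasis T (case_nat \<mu>0 \<mu>)
           (\<lambda>a c. if a = 0 \<or> c = 0 then (if a = c then 1 else 0) else P (a - 1) (c - 1))"
    (is "orthonormal_eigenbasis T ?\<mu> ?Q")
proof -
  have P_orth: "orthonormal_system m P"
    and P_eig: "\<And>a i. a < m \<Longrightarrow> i < m \<Longrightarrow> (\<Sum>j<m. T $$ (Suc i, Suc j) * P a j) = \<mu> a * P a i"
    using P unfolding orthonormal_eigenbasis_def by auto
  have "orthonormal_system (Suc m) ?Q"
    unfolding orthonormal_system_def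
  proof (intro allI impI)
    fix a c assume "a < Suc m" "c < Suc m"
    then show "(\<Sum>i<Suc m. ?Q a i * ?Q c i) = (if a = c then 1 else 0)"
      using orthonormal_systemD[OF P_orth, of "a - 1" "c - 1"]
      by (cases a; cases c) (auto simp: sum.lessThan_Suc_shift simp del: sum.lessThan_Suc)
  qed
  moreover have "(\<Sum>j<Suc m. T $$ (i, j) * ?Q a j) = ?\<mu> a * ?Q a i"
    if a: "a < Suc m" and i: "i < Suc m" for a i
  proof (cases a)
    case 0
    then show ?thesis
      using col0[OF i] by (simp add: sum.lessThan_Suc_shift del: sum.lessThan_Suc)
  next
    case (Suc a')
    then show ?thesis
      using a i row0 P_eig[of a' "i - 1"]
      by (cases i) (auto simp: sum.lessThan_Suc_shift simp del: sum.lessThan_Suc)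
  qed
  ultimately show ?thesis
    using T unfolding orthonormal_eigenbasis_def by auto
qed

lemma symmetric_mat_orthonormal_eigenbasis:
  fixes S :: "real mat"
  assumes "S \<in> carrier_mat n n" and "transpose_mat S = S"
  obtains \<mu> P where "orthonormal_eigenbasis S \<mu> P"
  using assms
proof (induction n arbitrary: S thesis)
  case 0
  then show ?case
    by (auto simp: orthonormal_eigenbasis_def orthonormal_system_def)
next
  case (Suc m)
  have S: "S \<in> carrier_mat (Suc m) (Suc m)" and sym: "transpose_mat S = S" by fact+
  obtain \<mu>0 x where x: "(\<Sum>i<Suc m. (x i)\<^sup>2) = 1"
    and Sx: "\<And>k. k < Suc m \<Longrightarrow> (\<Sum>l<Suc m. S $$ (k, l) * x l) = \<mu>0 * x k"
    using symmetric_mat_unit_eigenvector[OF S sym] by blast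
  obtain b where b: "orthonormal_system (Suc m) b" and b0: "\<And>i. i < Suc m \<Longrightarrow> b 0 i = x i"
    using orthonormal_system_extend[OF x] by blast
  define T where "T = basis_change_mat (Suc m) b S"
  have T_sym: "T $$ (d, c) = T $$ (c, d)" if "d < Suc m" "c < Suc m" for d c
    using that basis_change_mat_symmetric[OF S sym, of b] unfolding T_def
    by (metis basis_change_mat_carrier carrier_matD index_transpose_mat(1))
  \<comment> \<open>the first basis vector is the eigenvector x, so T is block diagonal\<close>
  have col0: "T $$ (d, 0) = (if d = 0 then \<mu>0 else 0)" if "d < Suc m" for d
    unfolding T_def using basis_change_mat_eigenvector_column[OF b b0 Sx that] by blast
  have row0: "T $$ (0, c) = (if c = 0 then \<mu>0 else 0)" if "c < Suc m" for c
    using T_sym[of c 0] col0[of c] that by simp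
  define S' where "S' = mat m m (\<lambda>(i, j). T $$ (Suc i, Suc j))"
  have "S' \<in> carrier_mat m m" "transpose_mat S' = S'"
    unfolding S'_def by (auto intro!: eq_matI simp: T_sym)
  then obtain \<mu> P where "orthonormal_eigenbasis S' \<mu> P"
    using Suc.IH by blast
  moreover have "T \<in> carrier_mat (Suc m) (Suc m)"
    unfolding T_def by (rule basis_change_mat_carrier)
  ultimately have "orthonormal_eigenbasis T (case_nat \<mu>0 \<mu>)
      (\<lambda>a c. if a = 0 \<or> c = 0 then (if a = c then 1 else 0) else P (a - 1) (c - 1))"
    using orthonormal_eigenbasis_deflate[OF _ row0 col0] unfolding S'_def by blast
  then show ?case
    using orthonormal_eigenbasis_change_basis[OF S b] Suc.prems(1) unfolding T_def by blast
qed

lemma orthonormal_eigenbasis_sorted: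
  assumes "orthonormal_eigenbasis S \<mu> P"
  obtains \<mu>' P' where "orthonormal_eigenbasis S \<mu>' P'"
    "\<And>a c. a \<le> c \<Longrightarrow> c < dim_row S \<Longrightarrow> \<mu>' c \<le> \<mu>' a"
proof -
  define n where "n = dim_row S"
  define xs where "xs = sort_key (\<lambda>a. - \<mu> a) [0..<n]"
  have mset_xs: "mset xs = mset [0..<n]" unfolding xs_def by simp
  then have len: "length xs = n" by (metis length_upt minus_nat.diff_0 size_mset)
  have set_xs: "set xs = {..<n}" by (metis mset_xs atLeast_upt set_mset_mset)
  have "distinct xs" unfolding xs_def by simp
  then have xs_inj: "xs ! a = xs ! c \<longleftrightarrow> a = c" if "a < n" "c < n" for a c
    using that len by (simp add: nth_eq_iff_index_eq)
  have xs_lt: "xs ! a < n" if "a < n" for a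
    using that len set_xs nth_mem by blast
  have sorted: "sorted (map (\<lambda>a. - \<mu> a) xs)" unfolding xs_def by (rule sorted_sort_key)
  show thesis
  proof (rule that[of "\<lambda>a. \<mu> (xs ! a)" "\<lambda>a. P (xs ! a)"])
    show "orthonormal_eigenbasis S (\<lambda>a. \<mu> (xs ! a)) (\<lambda>a. P (xs ! a))"
      using assms xs_lt xs_inj unfolding orthonormal_eigenbasis_def orthonormal_system_def n_def
      by auto
    fix a c assume "a \<le> c" "c < dim_row S"
    then show "\<mu> (xs ! c) \<le> \<mu> (xs ! a)"
      using sorted_nth_mono[OF sorted, of a c] len unfolding n_def by simp
  qed
qed

lemma char_poly_orthonormal_eigenbasis:
  fixes S :: "real mat"
  assumes S: "S \<in> carrier_mat n n" and E: "orthonormal_eigenbasis S \<mu> P"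
  shows "char_poly S = (\<Prod>a\<leftarrow>map \<mu> [0..<n]. [:- a, 1:])"
proof -
  have P: "orthonormal_system n P"
    and eig: "\<And>a i. a < n \<Longrightarrow> i < n \<Longrightarrow> (\<Sum>j<n. S $$ (i, j) * P a j) = \<mu> a * P a i"
    using E S unfolding orthonormal_eigenbasis_def by auto
  define B where "B = mat n n (\<lambda>(i, a). P a i)"
  define D where "D = mat n n (\<lambda>(i, j). if i = j then \<mu> i else 0)"
  have B: "B \<in> carrier_mat n n" "transpose_mat B \<in> carrier_mat n n"
    and D: "D \<in> carrier_mat n n" unfolding B_def D_def by auto
  have "B * transpose_mat B = 1\<^sub>m n"
    by (rule eq_matI)
      (auto simp: B_def scalar_prod_def atLeast0LessThan orthonormal_system_columns[OF P])
  moreover have "transpose_mat B * B = 1\<^sub>m n"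
    by (rule eq_matI) (auto simp: B_def scalar_prod_def atLeast0LessThan orthonormal_systemD[OF P])
  moreover have "S = B * D * transpose_mat B"
  proof (rule eq_matI)
    fix i j assume "i < dim_row (B * D * transpose_mat B)" "j < dim_col (B * D * transpose_mat B)"
    then have i: "i < n" and j: "j < n" using B by auto
    have "(B * D * transpose_mat B) $$ (i, j) = (\<Sum>a<n. (\<mu> a * P a i) * P a j)"
      using i j
      by (simp add: B_def D_def scalar_prod_def atLeast0LessThan if_distrib[of "\<lambda>x. _ * x"]
          mult_ac cong: if_cong)
    also have "\<dots> = (\<Sum>a<n. P a j * (\<Sum>l<n. P a l * S $$ (i, l)))"
      by (intro sum.cong refl) (simp add: eig[symmetric] i mult_ac)
    also have "\<dots> = S $$ (i, j)"
      by (rule orthonormal_expansion[OF P j])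
    finally show "S $$ (i, j) = (B * D * transpose_mat B) $$ (i, j)" by simp
  qed (use S B D in auto)
  ultimately have "similar_mat S D"
    unfolding similar_mat_def similar_mat_wit_def Let_def using S B D
    by (intro exI[of _ B] exI[of _ "transpose_mat B"]) auto
  then have "char_poly S = char_poly D" by (rule char_poly_similar)
  also have "\<dots> = (\<Prod>a\<leftarrow>diag_mat D. [:- a, 1:])"
    by (rule char_poly_upper_triangular[OF D]) (auto simp: upper_triangular_def D_def)
  also have "diag_mat D = map \<mu> [0..<n]" unfolding diag_mat_def D_def by auto
  finally show ?thesis .
qed

lemma singular_values_orthonormal_eigenbasis:
  fixes G :: "real mat"
  assumes G: "G \<in> carrier_mat m n" and E: "orthonormal_eigenbasis (transpose_mat G * G) \<mu> P"
    and antimono: "\<And>a c. a \<le> c \<Longrightarrow> c < n \<Longrightarrow> \<mu> c \<le> \<mu> a"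
  shows "singular_values G = map (\<lambda>a. sqrt (\<mu> a)) [0..<n]"
proof -
  define ys where "ys = map (\<lambda>a. sqrt (\<mu> a)) [0..<n]"
  have "proots (\<Prod>x\<leftarrow>xs. [:- \<mu> x, 1:]) = image_mset \<mu> (mset xs)" for xs
  proof (induction xs)
    case (Cons a xs)
    have "[:- \<mu> a, 1:] \<noteq> 0" "(\<Prod>x\<leftarrow>xs. [:- \<mu> x, 1:]) \<noteq> 0"
      by (auto simp: prod_list_zero_iff)
    with Cons show ?case
      by (simp add: proots_mult del: mult_pCons_left pCons_one)
  qed simp
  moreover have "transpose_mat G * G \<in> carrier_mat n n" using G by simp
  ultimately have "image_mset sqrt (proots (char_poly (transpose_mat G * G))) = mset ys"
    unfolding ys_def by (simp add: char_poly_orthonormal_eigenbasis[OF _ E] multiset.map_comp o_def)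
  then have "singular_values G = rev (sort ys)" unfolding singular_values_def by simp
  also have "sort ys = rev ys"
  proof (rule properties_for_sort)
    show "mset (rev ys) = mset ys" by simp
    show "sorted (rev ys)" unfolding sorted_rev_iff_nth_mono ys_def using antimono by simp
  qed
  finally show ?thesis unfolding ys_def by simp
qed

section \<open>Truncated singular value decompositions\<close>

lemma gram_eigenvalue_eq_sum_squares:
  fixes G :: "real mat"
  assumes G: "G \<in> carrier_mat m n" and E: "orthonormal_eigenbasis (transpose_mat G * G) \<mu> P"
    and a: "a < n"
  shows "\<mu> a = (\<Sum>l<m. (\<Sum>i<n. G $$ (l, i) * P a i)\<^sup>2)"
proof -
  have P: "orthonormal_system n P"
    and eig: "\<And>i. i < n \<Longrightarrow> (\<Sum>j<n. (\<Sum>l<m. G $$ (l, i) * G $$ (l, j)) * P a j) = \<mu> a * P a i"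
    using E G a unfolding orthonormal_eigenbasis_def
    by (auto simp: scalar_prod_def atLeast0LessThan)
  have "(\<Sum>l<m. (\<Sum>i<n. G $$ (l, i) * P a i)\<^sup>2)
      = (\<Sum>i<n. P a i * (\<Sum>j<n. (\<Sum>l<m. G $$ (l, i) * G $$ (l, j)) * P a j))"
    unfolding power2_eq_square sum_distrib_left sum_distrib_right
    by (subst sum.swap, rule sum.cong, simp, subst sum.swap) (simp add: sum_distrib_left mult_ac)
  also have "\<dots> = (\<Sum>i<n. P a i * (\<mu> a * P a i))"
    by (intro sum.cong refl) (simp add: eig)
  also have "\<dots> = \<mu> a * (\<Sum>i<n. P a i * P a i)"
    by (simp add: sum_distrib_left mult_ac)
  also have "\<dots> = \<mu> a"
    using orthonormal_systemD[OF P a a] by simp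
  finally show ?thesis by simp
qed

lemma rank_sum_outer_products_le:
  fixes f h :: "nat \<Rightarrow> nat \<Rightarrow> 'a :: field"
  shows "vec_space.rank m (mat m n (\<lambda>(i, j). \<Sum>a<t. f a i * h a j)) \<le> t"
proof (induction t)
  case 0
  have "mat m n (\<lambda>(i, j). \<Sum>a<0. f a i * h a j) = 0\<^sub>m m n" by (rule eq_matI) auto
  then show ?case using vec_space.rank_0I[of m n] by (simp del: lessThan_0)
next
  case (Suc t)
  have "mat m n (\<lambda>(i, j). \<Sum>a<Suc t. f a i * h a j)
     = mat m n (\<lambda>(i, j). \<Sum>a<t. f a i * h a j) + mat m n (\<lambda>(i, j). f t i * h t j)"
    by (rule eq_matI) auto
  moreover have "vec_space.rank m (mat m n (\<lambda>(i, j). f t i * h t j)) \<le> 1"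
    by (rule vec_space.rank_le_1_product_entries[where f = "f t" and g = "h t"]) auto
  ultimately show ?case
    using Suc vec_space.rank_subadditive[of "mat m n (\<lambda>(i, j). \<Sum>a<t. f a i * h a j)" m n
        "mat m n (\<lambda>(i, j). f t i * h t j)"] by simp
qed

lemma truncated_gram_eigenbasis_approximation:
  fixes G :: "real mat"
  assumes G: "G \<in> carrier_mat m n" and E: "orthonormal_eigenbasis (transpose_mat G * G) \<mu> P"
    and q: "q \<le> n"
  obtains X where "X \<in> carrier_mat m n" "vec_space.rank m X \<le> q"
    "(frob_norm (G - X))\<^sup>2 = (\<Sum>a\<in>{q..<n}. \<mu> a)"
proof -
  have P: "orthonormal_system n P"
    using E G unfolding orthonormal_eigenbasis_def by simp
  define g where "g a l = (\<Sum>i<n. G $$ (l, i) * P a i)" for a l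
  \<comment> \<open>keep the components of the rows of G along the first q eigenvectors\<close>
  define X where "X = mat m n (\<lambda>(l, j). \<Sum>a<q. g a l * P a j)"
  have X: "X \<in> carrier_mat m n" unfolding X_def by simp
  have coord: "(\<Sum>j<n. P a j * (G - X) $$ (l, j)) = (if a < q then 0 else g a l)"
    if a: "a < n" and l: "l < m" for a l
  proof -
    have "(\<Sum>j<n. P a j * X $$ (l, j)) = (if a < q then g a l else 0)"
      unfolding X_def using l q orthonormal_system_inner_combination[OF P a, of "{..<q}"] by simp
    moreover have "(\<Sum>j<n. P a j * G $$ (l, j)) = g a l"
      unfolding g_def by (simp add: mult.commute)
    ultimately show ?thesis
      using G X l by (simp add: right_diff_distrib sum_subtractf)
  qed
  have row: "(\<Sum>j<n. ((G - X) $$ (l, j))\<^sup>2) = (\<Sum>a\<in>{q..<n}. (g a l)\<^sup>2)" if l: "l < m" for l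
  proof -
    have "(\<Sum>j<n. ((G - X) $$ (l, j))\<^sup>2) = (\<Sum>a<n. (\<Sum>j<n. P a j * (G - X) $$ (l, j))\<^sup>2)"
      by (rule orthonormal_parseval[OF P])
    also have "\<dots> = (\<Sum>a<n. (if a < q then 0 else g a l)\<^sup>2)"
      by (intro sum.cong refl) (simp add: coord l)
    also have "\<dots> = (\<Sum>a\<in>{q..<n}. (g a l)\<^sup>2)"
      using q by (simp add: lessThan_atLeast0 sum.atLeastLessThan_concat[of 0 q n, symmetric])
    finally show ?thesis .
  qed
  have "(frob_norm (G - X))\<^sup>2 = (\<Sum>l<m. \<Sum>a\<in>{q..<n}. (g a l)\<^sup>2)"
    unfolding frob_norm_def using G X row by (simp add: sum_nonneg)
  also have "\<dots> = (\<Sum>a\<in>{q..<n}. \<mu> a)"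
    by (subst sum.swap) (simp add: gram_eigenvalue_eq_sum_squares[OF G E] g_def)
  finally have "(frob_norm (G - X))\<^sup>2 = (\<Sum>a\<in>{q..<n}. \<mu> a)" .
  moreover have "vec_space.rank m X \<le> q"
    unfolding X_def by (rule rank_sum_outer_products_le)
  ultimately show thesis using X that by blast
qed

lemma best_rank_approximation_le_singular_value_tail:
  fixes G M :: "real mat"
  assumes G: "G \<in> carrier_mat m n" and q: "q \<le> n"
    and best: "\<forall>X \<in> carrier_mat m n. vec_space.rank m X \<le> q \<longrightarrow>
                 frob_norm (G - M) \<le> frob_norm (G - X)"
  shows "frob_norm (G - M) \<le> (\<Sum>j\<in>{q+1..n}. singular_values G ! (j - 1))"
proof -
  have GG: "transpose_mat G * G \<in> carrier_mat n n"
    "transpose_mat (transpose_mat G * G) = transpose_mat G * G"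
    using G transpose_mult[of "transpose_mat G" n m G n] by auto
  obtain \<mu> P where E: "orthonormal_eigenbasis (transpose_mat G * G) \<mu> P"
    and antimono: "\<And>a c. a \<le> c \<Longrightarrow> c < n \<Longrightarrow> \<mu> c \<le> \<mu> a"
    using symmetric_mat_orthonormal_eigenbasis[OF GG] orthonormal_eigenbasis_sorted GG(1)
    by (metis carrier_matD(1))
  have \<mu>_nonneg: "0 \<le> \<mu> a" if "a < n" for a
    using gram_eigenvalue_eq_sum_squares[OF G E that] by (simp add: sum_nonneg)
  obtain X where X: "X \<in> carrier_mat m n" "vec_space.rank m X \<le> q"
    and err: "(frob_norm (G - X))\<^sup>2 = (\<Sum>a\<in>{q..<n}. \<mu> a)"
    using truncated_gram_eigenbasis_approximation[OF G E q] by blast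
  have "frob_norm (G - M) \<le> frob_norm (G - X)"
    using best X by blast
  also have "\<dots> = L2_set (\<lambda>a. sqrt (\<mu> a)) {q..<n}"
  proof -
    have "(\<Sum>a\<in>{q..<n}. (sqrt (\<mu> a))\<^sup>2) = (\<Sum>a\<in>{q..<n}. \<mu> a)"
      by (intro sum.cong refl) (simp add: \<mu>_nonneg)
    moreover have "0 \<le> frob_norm (G - X)" by (rule frob_norm_nonneg)
    ultimately show ?thesis
      unfolding L2_set_def err[symmetric] by simp
  qed
  also have "\<dots> \<le> (\<Sum>a\<in>{q..<n}. sqrt (\<mu> a))"
    by (rule L2_set_le_sum) (simp add: \<mu>_nonneg)
  also have "\<dots> = (\<Sum>j\<in>{q+1..n}. singular_values G ! (j - 1))"
    using singular_values_orthonormal_eigenbasis[OF G E antimono]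
    by (intro sum.reindex_bij_witness[of _ "\<lambda>j. j - 1" Suc]) auto
  finally show ?thesis .
qed

section \<open>Diagonal scalings and Hadamard products\<close>

lemma mat_sum_carrier [simp]: "mat_sum r c I F \<in> carrier_mat r c"
  unfolding mat_sum_def by simp

lemma mat_sum_cong: "(\<And>m. m \<in> I \<Longrightarrow> F m = H m) \<Longrightarrow> mat_sum r c I F = mat_sum r c I H"
  unfolding mat_sum_def by simp

lemma mat_sum_minus:
  fixes F H :: "'i \<Rightarrow> 'a::ab_group_add mat"
  assumes "\<And>m. m \<in> I \<Longrightarrow> F m \<in> carrier_mat r c" "\<And>m. m \<in> I \<Longrightarrow> H m \<in> carrier_mat r c"
  shows "mat_sum r c I F - mat_sum r c I H = mat_sum r c I (\<lambda>m. F m - H m)"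
  using assms
  by (intro eq_matI)
    (auto simp: mat_sum_def sum_subtractf carrier_matD[OF assms(1)] carrier_matD[OF assms(2)])

lemma mat_sum_mult_left:
  fixes W :: "'a::comm_semiring_0 mat"
  assumes W: "W \<in> carrier_mat r k" and M: "\<And>j. j \<in> J \<Longrightarrow> M j \<in> carrier_mat k c"
  shows "mat_sum r c J (\<lambda>j. W * M j) = W * mat_sum k c J M"
proof (rule eq_matI)
  fix i l assume "i < dim_row (W * mat_sum k c J M)" "l < dim_col (W * mat_sum k c J M)"
  then have il: "i < r" "l < c" using W by (auto simp: mat_sum_def)
  have "(\<Sum>j\<in>J. (W * M j) $$ (i, l)) = (\<Sum>j\<in>J. \<Sum>t<k. W $$ (i, t) * M j $$ (t, l))"
    using W il
    by (intro sum.cong refl) (auto simp: scalar_prod_def atLeast0LessThan carrier_matD[OF M])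
  also have "\<dots> = (\<Sum>t<k. W $$ (i, t) * (\<Sum>j\<in>J. M j $$ (t, l)))"
    by (subst sum.swap) (simp add: sum_distrib_left)
  finally show "mat_sum r c J (\<lambda>j. W * M j) $$ (i, l) = (W * mat_sum k c J M) $$ (i, l)"
    using W il by (simp add: mat_sum_def scalar_prod_def atLeast0LessThan)
qed (use W in \<open>auto simp: mat_sum_def\<close>)

lemma hadamard_carrier [simp]: "E \<in> carrier_mat m n \<Longrightarrow> hadamard E F \<in> carrier_mat m n"
  unfolding hadamard_def by auto

lemma hadamard_minus_left:
  fixes E E' F :: "'a::ring mat"
  assumes "E \<in> carrier_mat m n" "E' \<in> carrier_mat m n"
  shows "hadamard (E - E') F = hadamard E F - hadamard E' F"
  using assms by (intro eq_matI) (auto simp: hadamard_def left_diff_distrib)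

lemma frob_norm_hadamard_le:
  fixes E F :: "'a::real_normed_algebra mat"
  assumes E: "E \<in> carrier_mat m n" and F: "F \<in> carrier_mat m n"
  shows "frob_norm (hadamard E F) \<le> frob_norm E * frob_norm F"
proof -
  define s where "s = (\<Sum>i<m. \<Sum>j<n. (norm (E $$ (i, j)))\<^sup>2)"
  have entry: "(norm (E $$ (i, j)))\<^sup>2 \<le> s" if "i < m" "j < n" for i j
  proof -
    have "(norm (E $$ (i, j)))\<^sup>2 \<le> (\<Sum>j'<n. (norm (E $$ (i, j')))\<^sup>2)"
      by (rule member_le_sum) (use that in auto)
    also have "\<dots> \<le> s"
      unfolding s_def by (rule member_le_sum) (use that in \<open>auto intro: sum_nonneg\<close>)
    finally show ?thesis .
  qed
  have "(norm (E $$ (i, j) * F $$ (i, j)))\<^sup>2 \<le> s * (norm (F $$ (i, j)))\<^sup>2"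
    if "i < m" "j < n" for i j
  proof -
    have "(norm (E $$ (i, j) * F $$ (i, j)))\<^sup>2 \<le> (norm (E $$ (i, j)) * norm (F $$ (i, j)))\<^sup>2"
      by (intro power_mono norm_mult_ineq) simp
    also have "\<dots> \<le> s * (norm (F $$ (i, j)))\<^sup>2"
      unfolding power_mult_distrib by (intro mult_right_mono entry that) simp
    finally show ?thesis .
  qed
  then have "(\<Sum>i<m. \<Sum>j<n. (norm (E $$ (i, j) * F $$ (i, j)))\<^sup>2)
      \<le> s * (\<Sum>i<m. \<Sum>j<n. (norm (F $$ (i, j)))\<^sup>2)"
    unfolding sum_distrib_left by (intro sum_mono) auto
  then have "sqrt (\<Sum>i<m. \<Sum>j<n. (norm (E $$ (i, j) * F $$ (i, j)))\<^sup>2)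
      \<le> sqrt s * sqrt (\<Sum>i<m. \<Sum>j<n. (norm (F $$ (i, j)))\<^sup>2)"
    by (simp flip: real_sqrt_mult)
  then show ?thesis
    using E F unfolding frob_norm_def hadamard_def s_def by simp
qed

lemma mat_sum_diag_mult_diag:
  fixes F :: "'a::comm_ring_1 mat"
  assumes F: "F \<in> carrier_mat k k"
  shows "mat_sum k k J (\<lambda>j. mat_diag k (u j) * F * mat_diag k (v j))
       = hadamard (mat k k (\<lambda>(i, l). \<Sum>j\<in>J. u j i * v j l)) F"
  using F
  by (intro eq_matI)
    (auto simp: mat_sum_def hadamard_def mat_diag_mult_left mat_diag_mult_right[of _ k k]
        sum_distrib_left mult_ac)

lemma mat_sum_diag_scaled_eq_hadamard:
  fixes W F :: "complex mat" and U V :: "real mat"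
  assumes W: "W \<in> carrier_mat r k" and F: "F \<in> carrier_mat k k"
    and U: "U \<in> carrier_mat k q" and V: "V \<in> carrier_mat k q"
  shows "mat_sum r k {..<q} (\<lambda>j. W * mat_diag k (\<lambda>i. complex_of_real (U $$ (i, j))) * F
                                   * mat_diag k (\<lambda>i. complex_of_real (V $$ (i, j))))
       = W * hadamard (map_mat complex_of_real (U * transpose_mat V)) F"
proof -
  have UV: "map_mat complex_of_real (U * transpose_mat V)
      = mat k k (\<lambda>(i, l). \<Sum>j<q. complex_of_real (U $$ (i, j)) * complex_of_real (V $$ (l, j)))"
    using U V by (intro eq_matI) (auto simp: scalar_prod_def atLeast0LessThan)
  have "mat_sum r k {..<q} (\<lambda>j. W * mat_diag k (\<lambda>i. complex_of_real (U $$ (i, j))) * F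
                                   * mat_diag k (\<lambda>i. complex_of_real (V $$ (i, j))))
      = mat_sum r k {..<q} (\<lambda>j. W * (mat_diag k (\<lambda>i. complex_of_real (U $$ (i, j))) * F
                                   * mat_diag k (\<lambda>i. complex_of_real (V $$ (i, j)))))"
  proof -
    have "W * D * F * D' = W * (D * F * D')" if D: "D \<in> carrier_mat k k" "D' \<in> carrier_mat k k"
      for D D' :: "complex mat"
      using assoc_mult_mat[OF W D(1) F] assoc_mult_mat[OF W mult_carrier_mat[OF D(1) F] D(2)]
      by simp
    then show ?thesis unfolding mat_sum_def by simp
  qed
  also have "\<dots> = W * hadamard (map_mat complex_of_real (U * transpose_mat V)) F"
    using F by (subst mat_sum_mult_left[OF W])
      (auto intro!: mult_carrier_mat simp: mat_sum_diag_mult_diag UV)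
  finally show ?thesis .
qed

lemma hadamard_low_rank_residual:
  fixes A W F :: "complex mat" and G U V :: "real mat"
  assumes A: "A \<in> carrier_mat s r" and W: "W \<in> carrier_mat r k" and F: "F \<in> carrier_mat k k"
    and G: "G \<in> carrier_mat k k" and U: "U \<in> carrier_mat k q" and V: "V \<in> carrier_mat k q"
  shows "A * W * hadamard (map_mat complex_of_real G) F
         - A * mat_sum r k {..<q} (\<lambda>j. W * mat_diag k (\<lambda>i. complex_of_real (U $$ (i, j))) * F
                                          * mat_diag k (\<lambda>i. complex_of_real (V $$ (i, j))))
       = A * W * hadamard (map_mat complex_of_real (G - U * transpose_mat V)) F"
proof -
  define H where "H E = hadamard (map_mat complex_of_real E) F" for E
  have H: "H E \<in> carrier_mat k k" if "E \<in> carrier_mat k k" for E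
    using that unfolding H_def hadamard_def by simp
  have UV: "U * transpose_mat V \<in> carrier_mat k k" using U V by simp
  have "map_mat complex_of_real (G - U * transpose_mat V)
      = map_mat complex_of_real G - map_mat complex_of_real (U * transpose_mat V)"
    using G U V by (intro eq_matI) auto
  then have "H (G - U * transpose_mat V) = H G - H (U * transpose_mat V)"
    unfolding H_def using G UV by (simp add: hadamard_minus_left)
  moreover have "A * W * (H G - H (U * transpose_mat V))
      = A * (W * H G) - A * (W * H (U * transpose_mat V))"
    using A W H[OF G] H[OF UV]
    by (simp add: mult_minus_distrib_mat[of "A * W" s k] assoc_mult_mat[OF A W])
  ultimately show ?thesis
    using A W H[OF G] H[OF UV]
    by (simp add: mat_sum_diag_scaled_eq_hadamard[OF W F U V] H_def[symmetric]
        assoc_mult_mat[OF A W])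
qed

lemma mat_sum_hadamard_low_rank_residual:
  fixes A F :: "'i \<Rightarrow> complex mat" and W :: "complex mat" and G U V :: "real mat"
  assumes A: "\<And>m. m \<in> I \<Longrightarrow> A m \<in> carrier_mat s r" and W: "W \<in> carrier_mat r k"
    and F: "\<And>m. m \<in> I \<Longrightarrow> F m \<in> carrier_mat k k" and G: "G \<in> carrier_mat k k"
    and U: "U \<in> carrier_mat k q" and V: "V \<in> carrier_mat k q"
  shows "mat_sum s k I (\<lambda>m. A m * W * hadamard (map_mat complex_of_real G) (F m))
         - mat_sum s k I (\<lambda>m. A m * mat_sum r k {..<q}
             (\<lambda>j. W * mat_diag k (\<lambda>i. complex_of_real (U $$ (i, j))) * F m
                   * mat_diag k (\<lambda>i. complex_of_real (V $$ (i, j)))))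
       = mat_sum s k I
           (\<lambda>m. A m * W * hadamard (map_mat complex_of_real (G - U * transpose_mat V)) (F m))"
proof (subst mat_sum_minus)
  fix m assume m: "m \<in> I"
  show "A m * W * hadamard (map_mat complex_of_real G) (F m) \<in> carrier_mat s k"
    using G by (intro mult_carrier_mat[OF mult_carrier_mat[OF A[OF m] W]]) simp
  show "A m * mat_sum r k {..<q} (\<lambda>j. W * mat_diag k (\<lambda>i. complex_of_real (U $$ (i, j))) * F m
          * mat_diag k (\<lambda>i. complex_of_real (V $$ (i, j)))) \<in> carrier_mat s k"
    by (rule mult_carrier_mat[OF A[OF m] mat_sum_carrier])
qed (intro mat_sum_cong hadamard_low_rank_residual[OF A W F G U V])

lemma frob_norm_mat_sum_hadamard_le:
  fixes A F :: "'i \<Rightarrow> complex mat" and W E :: "complex mat"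
  assumes I: "finite I" and A: "\<And>m. m \<in> I \<Longrightarrow> A m \<in> carrier_mat s r"
    and W: "W \<in> carrier_mat r k" and E: "E \<in> carrier_mat k k"
    and F: "\<And>m. m \<in> I \<Longrightarrow> F m \<in> carrier_mat k k"
  shows "frob_norm (mat_sum s k I (\<lambda>m. A m * W * hadamard E (F m)))
         \<le> (\<Sum>m\<in>I. spec_norm (A m * W) * frob_norm (F m)) * frob_norm E"
proof -
  have AW: "A m * W \<in> carrier_mat s k" if "m \<in> I" for m
    using A[OF that] W by simp
  have "frob_norm (mat_sum s k I (\<lambda>m. A m * W * hadamard E (F m)))
      \<le> (\<Sum>m\<in>I. frob_norm (A m * W * hadamard E (F m)))"
    using E by (intro frob_norm_mat_sum_le I) (auto intro: mult_carrier_mat[OF AW])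
  also have "\<dots> \<le> (\<Sum>m\<in>I. spec_norm (A m * W) * (frob_norm E * frob_norm (F m)))"
  proof (intro sum_mono order_trans[OF frob_norm_mult_le_spec_norm] mult_left_mono)
    fix m assume m: "m \<in> I"
    show "A m * W \<in> carrier_mat s k" "0 \<le> spec_norm (A m * W)"
      using AW[OF m] spec_norm_nonneg by blast+
    show "hadamard E (F m) \<in> carrier_mat k k" using E by simp
    show "frob_norm (hadamard E (F m)) \<le> frob_norm E * frob_norm (F m)"
      using frob_norm_hadamard_le[OF E F[OF m]] .
  qed
  also have "\<dots> = (\<Sum>m\<in>I. spec_norm (A m * W) * frob_norm (F m)) * frob_norm E"
    unfolding sum_distrib_right by (simp add: mult_ac)
  finally show ?thesis .
qed

theorem theorem6:
  fixes f :: "nat \<Rightarrow> complex \<Rightarrow> complex"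
    and A :: "nat \<Rightarrow> complex mat"
    and W :: "complex mat"
    and U V :: "real mat"
    and n k p q :: nat and r :: real
  assumes r: "r > 0"
    and f_an: "\<forall>m\<in>{1..p}. f m analytic_on ball 0 r"
    and A_dim: "\<forall>m\<in>{1..p}. A m \<in> carrier_mat n n"
    and k: "k \<ge> 1"
    and W_dim: "W \<in> carrier_mat n (k + 1)"
    and q: "1 \<le> q" "q \<le> k + 1"
    and UV_dim: "U \<in> carrier_mat (k + 1) q" "V \<in> carrier_mat (k + 1) q"
    and best: "\<forall>X \<in> carrier_mat (k + 1) (k + 1). vec_space.rank (k + 1) X \<le> q \<longrightarrow>
                 frob_norm (Gmat (k + 1) - U * transpose_mat V) \<le> frob_norm (Gmat (k + 1) - X)"
  shows "frob_norm
           (mat_sum n (k + 1) {1..p}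
              (\<lambda>m. A m * W * hadamard (map_mat complex_of_real (Gmat (k + 1))) (Fmat (k + 1) (f m)))
            - mat_sum n (k + 1) {1..p}
              (\<lambda>m. A m * mat_sum n (k + 1) {..<q}
                 (\<lambda>j. W * mat_diag (k + 1) (\<lambda>i. complex_of_real (U $$ (i, j))) * Fmat (k + 1) (f m)
                       * mat_diag (k + 1) (\<lambda>i. complex_of_real (V $$ (i, j))))))
         \<le> (\<Sum>m\<in>{1..p}. spec_norm (A m * W) * frob_norm (Fmat (k + 1) (f m)))
            * (\<Sum>j\<in>{q+1..k+1}. singular_values (Gmat (k + 1)) ! (j - 1))"
proof -
  let ?K = "k + 1"
  let ?E = "Gmat ?K - U * transpose_mat V"
  have G: "Gmat ?K \<in> carrier_mat ?K ?K" and F: "\<And>m. Fmat ?K (f m) \<in> carrier_mat ?K ?K"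
    by (simp_all add: Gmat_def Fmat_def)
  have E: "?E \<in> carrier_mat ?K ?K"
    using UV_dim by (intro minus_carrier_mat mult_carrier_mat[of _ ?K q]) auto
  have A: "\<And>m. m \<in> {1..p} \<Longrightarrow> A m \<in> carrier_mat n n"
    using A_dim by blast
  have "frob_norm (mat_sum n ?K {1..p}
          (\<lambda>m. A m * W * hadamard (map_mat complex_of_real ?E) (Fmat ?K (f m))))
      \<le> (\<Sum>m\<in>{1..p}. spec_norm (A m * W) * frob_norm (Fmat ?K (f m)))
         * frob_norm (map_mat complex_of_real ?E)"
    using A E F by (intro frob_norm_mat_sum_hadamard_le[OF _ _ W_dim]) auto
  also have "\<dots> = (\<Sum>m\<in>{1..p}. spec_norm (A m * W) * frob_norm (Fmat ?K (f m))) * frob_norm ?E"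
    by (simp add: frob_norm_map_of_real)
  also have "\<dots> \<le> (\<Sum>m\<in>{1..p}. spec_norm (A m * W) * frob_norm (Fmat ?K (f m)))
                  * (\<Sum>j\<in>{q+1..?K}. singular_values (Gmat ?K) ! (j - 1))"
    using A W_dim
    by (intro mult_left_mono best_rank_approximation_le_singular_value_tail[OF G q(2) best]
        sum_nonneg mult_nonneg_nonneg frob_norm_nonneg spec_norm_nonneg) auto
  finally show ?thesis
    by (subst mat_sum_hadamard_low_rank_residual[OF A W_dim F G UV_dim])
qed

end
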